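(* Let $(a_{n,k})_{n,k\ge 1}$ be complex numbers such that each power series $1+\sum_{k=1}^{\infty}a_{n,k}\lambda^k$ is analytic (near $\lambda=0$), the infinite product $\prod_{n=1}^{\infty}\big(1+\sum_{k=1}^{\infty}a_{n,k}\lambda^k\big)$ converges uniformly, and every series of the form $\sum_{n=1}^{\infty}\prod_{j=1}^{m}a_{n,k_j}$ ($m\in\mathbb{N}$, $k_j\in\mathbb{N}$) converges. Write $$\prod_{n=1}^{\infty}\Big(1+\sum_{k=1}^{\infty}a_{n,k}\lambda^k\Big)=1+\sum_{k=1}^{\infty}X_k\lambda^k.$$ Then for every $k\in\mathbb{N}$, $$X_k=\sum_{L\vdash k}\frac{1}{C_{stb}(L)}\sum_{\sigma\in S_{\ell(L)}}\operatorname{sign}(\sigma)\,\mathbb{A}_{\sigma,L}.$$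
   Context: $L\vdash k$ means $L=[x_1,\dots,x_m]$ is a partition of $k$: a multiset of positive integers with $\sum x_i=k$; $\ell(L)=m$ is its length. $C_{stb}(L):=\prod_{x}(\#\{i: x_i=x\})!$, the product over distinct values $x$ occurring in $L$. Write $L=[k_1,\dots,k_m]$ with $k_1\le\cdots\le k_m$. For $\sigma\in S_m$ (symmetric group, $\operatorname{sign}$ its sign), write $\sigma$ as a product of disjoint cycles $C_1,\dots,C_r$, keeping fixed points as cycles of length one; then $\mathbb{A}_{\sigma,L}:=\prod_{t=1}^{r}\big(\sum_{n=1}^{\infty}\prod_{i\in C_t}a_{n,k_i}\big)$. *)

theory Defs
  imports "HOL-Analysis.Analysis" "HOL-Combinatorics.Combinatorics"
begin

definition partitions_of :: "nat \<Rightarrow> nat list set" where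
  "partitions_of k = {L. sorted L \<and> 0 \<notin> set L \<and> sum_list L = k}"

definition C_stb :: "nat list \<Rightarrow> nat" where
  "C_stb L = (\<Prod>x\<in>set L. fact (count_list L x))"

definition cycles_of :: "(nat \<Rightarrow> nat) \<Rightarrow> nat \<Rightarrow> nat set set" where
  "cycles_of \<sigma> m = (\<lambda>i. orbit \<sigma> i) ` {..<m}"

text \<open>A_{sigma,L} = prod over cycles C of sum_{n>=1} prod_{i in C} a_{n,k_i}
  (positions of L are 0-indexed here; the sequence index n starts at 1).\<close>
definition A_coef :: "(nat \<Rightarrow> nat \<Rightarrow> complex) \<Rightarrow> (nat \<Rightarrow> nat) \<Rightarrow> nat list \<Rightarrow> complex" where
  "A_coef a \<sigma> L = (\<Prod>C\<in>cycles_of \<sigma> (length L). (\<Sum>n. \<Prod>i\<in>C. a (Suc n) (L ! i)))"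

definition factor_fun :: "(nat \<Rightarrow> nat \<Rightarrow> complex) \<Rightarrow> nat \<Rightarrow> complex \<Rightarrow> complex" where
  "factor_fun a n z = 1 + (\<Sum>k. a n (Suc k) * z ^ Suc k)"

end

theory Submission
  imports Defs "HOL-Complex_Analysis.Complex_Analysis"
begin

text \<open>
  For finite \<open>A\<close>, the coefficient of \<open>\<lambda>^k\<close> in \<open>\<Prod>n\<in>A. (1 + \<Sum>j\<ge>1. b n j \<lambda>^j)\<close> is a sum
  over the multisets \<open>X\<close> of size \<open>k\<close> on \<open>A\<close>. Listing the support of \<open>X\<close> in each of its \<open>m!\<close>
  orders and recording the multiplicities gives a composition \<open>L\<close> of \<open>k\<close> together with
  pairwise distinct indices \<open>n_1, \<dots>, n_m \<in> A\<close>. Hence the coefficient is the sum over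
  compositions \<open>L\<close> of \<open>1/m!\<close> times the sum over distinct indices of \<open>\<Prod>i. b n_i L_i\<close>, and
  grouping the compositions by their sorted rearrangement yields the weight \<open>1 / C_stb L\<close>.
  The sum over distinct indices is the signed cycle sum: expanding the cycle factors of \<open>\<sigma>\<close>
  gives all index tuples that are constant on the cycles of \<open>\<sigma>\<close>, and for a fixed tuple the
  signs of the permutations fixing it cancel unless its entries are distinct.

  The partial products converge uniformly on a disc, so their Taylor coefficients converge
  to \<open>X k\<close>; by the summability hypothesis they also converge termwise to the right-hand side.
\<close>

section \<open>Stabilisers of lists and cycles of permutations\<close>

lemma prod_nth_distinct:
  assumes "distinct xs"
  shows "(\<Prod>i<length xs. f (xs ! i)) = prod f (set xs)"
  using assms by (simp add: prod.distinct_set_conv_list prod.list_conv_set_nth atLeast0LessThan)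

lemma permute_list_eq_self_iff:
  assumes "\<sigma> permutes {..<length xs}"
  shows "permute_list \<sigma> xs = xs \<longleftrightarrow> (\<forall>i. xs ! \<sigma> i = xs ! i)"
proof -
  have "\<sigma> i = i" if "i \<ge> length xs" for i
    using assms that by (auto intro: permutes_not_in)
  then have "(\<forall>i. xs ! \<sigma> i = xs ! i) \<longleftrightarrow> (\<forall>i<length xs. xs ! \<sigma> i = xs ! i)"
    by (metis not_less)
  then show ?thesis
    by (auto simp: list_eq_iff_nth_eq permute_list_nth[OF assms])
qed

lemma permute_list_eq_self_distinct:
  assumes "distinct xs" "\<sigma> permutes {..<length xs}" "permute_list \<sigma> xs = xs"
  shows "\<sigma> = id"
proof
  fix i
  have \<sigma>: "\<forall>i. xs ! \<sigma> i = xs ! i"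
    using assms(2,3) by (simp add: permute_list_eq_self_iff)
  show "\<sigma> i = id i"
  proof (cases "i < length xs")
    case True
    then show ?thesis
      using \<sigma> assms(1) permutes_in_image[OF assms(2)] by (metis id_apply lessThan_iff nth_eq_iff_index_eq)
  qed (simp add: permutes_not_in[OF assms(2)])
qed

lemma sum_sign_stabilizer:
  "(\<Sum>\<sigma> | \<sigma> permutes {..<length xs} \<and> permute_list \<sigma> xs = xs. sign \<sigma>)
     = (if distinct xs then 1 else 0)"
proof -
  define S where "S = {\<sigma>. \<sigma> permutes {..<length xs} \<and> permute_list \<sigma> xs = xs}"
  show ?thesis
  proof (cases "distinct xs")
    case True
    then have "S = {id}"
      using permute_list_eq_self_distinct by (auto simp: S_def permutes_id)
    then show ?thesis using True by (simp add: S_def)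
  next
    case False
    then obtain i j where ij: "i < length xs" "j < length xs" "i \<noteq> j" "xs ! i = xs ! j"
      by (auto simp: distinct_conv_nth)
    define \<tau> where "\<tau> = Transposition.transpose i j"
    have \<tau>: "\<tau> permutes {..<length xs}" "permute_list \<tau> xs = xs"
      using ij by (auto simp: \<tau>_def permutes_swap_id permute_list_eq_self_iff Transposition.transpose_def)
    have sign_\<tau>\<sigma>: "sign (\<tau> \<circ> \<sigma>) = - sign \<sigma>" if "\<sigma> \<in> S" for \<sigma>
    proof -
      have "permutation \<sigma>" "permutation \<tau>"
        using that \<tau>(1) by (auto simp: S_def permutation_permutes)
      then show ?thesis using ij(3) by (simp add: sign_compose \<tau>_def sign_swap_id)
    qed
    have closed: "(\<circ>) \<tau> ` S \<subseteq> S"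
      using \<tau> by (auto simp: S_def permutes_compose permute_list_compose)
    have "\<tau> \<circ> (\<tau> \<circ> \<sigma>) = \<sigma>" for \<sigma>
      by (auto simp: \<tau>_def fun_eq_iff)
    then have "bij_betw ((\<circ>) \<tau>) S S"
      using closed by (intro bij_betw_byWitness[where f' = "(\<circ>) \<tau>"]) auto
    then have "(\<Sum>\<sigma>\<in>S. sign \<sigma>) = (\<Sum>\<sigma>\<in>S. sign (\<tau> \<circ> \<sigma>))"
      by (rule sum.reindex_bij_betw[symmetric])
    also have "\<dots> = - (\<Sum>\<sigma>\<in>S. sign \<sigma>)"
      by (simp add: sign_\<tau>\<sigma> sum_negf)
    finally show ?thesis using False by (simp add: S_def)
  qed
qed

lemma orbit_invariant_eq:
  assumes "\<And>i. f (\<sigma> i) = f i" and "j \<in> orbit \<sigma> i"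
  shows "f j = f i"
  using assms(2) by induction (simp_all add: assms(1))

lemma orbit_eq_if_mem:
  assumes "permutation \<sigma>" and "j \<in> orbit \<sigma> i"
  shows "orbit \<sigma> j = orbit \<sigma> i"
  using orbit_cyclic_eq3[OF cyclic_on_orbit'[OF assms(1)] assms(2)] .

lemma prod_cycles_of:
  assumes "\<sigma> permutes {..<m}"
  shows "(\<Prod>C\<in>cycles_of \<sigma> m. \<Prod>i\<in>C. h i) = (\<Prod>i<m. h i)"
proof -
  have perm: "permutation \<sigma>"
    using assms by (auto simp: permutation_permutes)
  have union: "\<Union>(cycles_of \<sigma> m) = {..<m}"
    using permutes_orbit_subset[OF assms] permutation_self_in_orbit[OF perm]
    by (auto simp: cycles_of_def)
  have "C = orbit \<sigma> x" if "C \<in> cycles_of \<sigma> m" "x \<in> C" for C x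
    using that orbit_eq_if_mem[OF perm] by (auto simp: cycles_of_def)
  then have disjoint: "\<forall>C\<in>cycles_of \<sigma> m. \<forall>D\<in>cycles_of \<sigma> m. C \<noteq> D \<longrightarrow> C \<inter> D = {}"
    by blast
  have finite: "\<forall>C\<in>cycles_of \<sigma> m. finite C"
    using permutes_orbit_subset[OF assms] finite_subset by (fastforce simp: cycles_of_def)
  show ?thesis
    using prod.Union_disjoint[OF finite disjoint, of h] union by simp
qed

lemma stable_list_cycle_labelling:
  assumes \<sigma>: "\<sigma> permutes {..<m}"
    and xs: "set xs \<subseteq> A" "length xs = m" "permute_list \<sigma> xs = xs"
  obtains g where "g \<in> cycles_of \<sigma> m \<rightarrow>\<^sub>E A" "xs = map (\<lambda>i. g (orbit \<sigma> i)) [0..<m]"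
proof -
  have invariant: "xs ! \<sigma> i = xs ! i" for i
    using \<sigma> xs by (simp add: permute_list_eq_self_iff)
  have Min_orbit: "Min (orbit \<sigma> i) \<in> orbit \<sigma> i" "orbit \<sigma> i \<subseteq> {..<m}" if "i < m" for i
  proof -
    show sub: "orbit \<sigma> i \<subseteq> {..<m}"
      using permutes_orbit_subset[OF \<sigma>] that by blast
    show "Min (orbit \<sigma> i) \<in> orbit \<sigma> i"
      using finite_subset[OF sub] orbit_nonempty by (rule Min_in) simp
  qed
  define g where "g = (\<lambda>C\<in>cycles_of \<sigma> m. xs ! Min C)"
  have g_orbit: "g (orbit \<sigma> i) = xs ! i" if "i < m" for i
    using that orbit_invariant_eq[of "(!) xs", OF invariant Min_orbit(1)]
    by (simp add: g_def cycles_of_def)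
  have "g \<in> cycles_of \<sigma> m \<rightarrow>\<^sub>E A"
    unfolding g_def restrict_PiE_iff
  proof
    fix C assume "C \<in> cycles_of \<sigma> m"
    then obtain i where "i < m" "C = orbit \<sigma> i"
      by (auto simp: cycles_of_def)
    then have "Min C < length xs"
      using Min_orbit xs(2) by blast
    then show "xs ! Min C \<in> A"
      using xs(1) nth_mem by blast
  qed
  moreover have "xs = map (\<lambda>i. g (orbit \<sigma> i)) [0..<m]"
    by (rule nth_equalityI) (simp_all add: xs(2) g_orbit)
  ultimately show ?thesis
    by (rule that)
qed

lemma bij_betw_cycle_labellings:
  assumes "\<sigma> permutes {..<m}"
  shows "bij_betw (\<lambda>g. map (\<lambda>i. g (orbit \<sigma> i)) [0..<m]) (cycles_of \<sigma> m \<rightarrow>\<^sub>E A)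
           {xs. set xs \<subseteq> A \<and> length xs = m \<and> permute_list \<sigma> xs = xs}"
proof (rule bij_betw_imageI)
  have perm: "permutation \<sigma>"
    using assms by (auto simp: permutation_permutes)
  show "inj_on (\<lambda>g. map (\<lambda>i. g (orbit \<sigma> i)) [0..<m]) (cycles_of \<sigma> m \<rightarrow>\<^sub>E A)"
  proof (rule inj_onI)
    fix g g' assume g: "g \<in> cycles_of \<sigma> m \<rightarrow>\<^sub>E A" and g': "g' \<in> cycles_of \<sigma> m \<rightarrow>\<^sub>E A"
      and eq: "map (\<lambda>i. g (orbit \<sigma> i)) [0..<m] = map (\<lambda>i. g' (orbit \<sigma> i)) [0..<m]"
    have "g (orbit \<sigma> i) = g' (orbit \<sigma> i)" if "i < m" for i
      using arg_cong[OF eq, of "\<lambda>xs. xs ! i"] that by simp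
    then show "g = g'"
      by (intro PiE_ext[OF g g']) (auto simp: cycles_of_def)
  qed
  show "(\<lambda>g. map (\<lambda>i. g (orbit \<sigma> i)) [0..<m]) ` (cycles_of \<sigma> m \<rightarrow>\<^sub>E A)
          = {xs. set xs \<subseteq> A \<and> length xs = m \<and> permute_list \<sigma> xs = xs}"
  proof (intro set_eqI iffI)
    fix xs assume "xs \<in> (\<lambda>g. map (\<lambda>i. g (orbit \<sigma> i)) [0..<m]) ` (cycles_of \<sigma> m \<rightarrow>\<^sub>E A)"
    then obtain g where xs: "xs = map (\<lambda>i. g (orbit \<sigma> i)) [0..<m]" and g: "g \<in> cycles_of \<sigma> m \<rightarrow>\<^sub>E A"
      by (rule imageE)
    have "xs ! \<sigma> i = xs ! i" for i
      using xs permutation_orbit_step[OF perm] permutes_not_in[OF assms] permutes_in_image[OF assms]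
      by (cases "i < m") auto
    then show "xs \<in> {xs. set xs \<subseteq> A \<and> length xs = m \<and> permute_list \<sigma> xs = xs}"
      using g xs assms by (auto simp: cycles_of_def permute_list_eq_self_iff)
  next
    fix xs assume "xs \<in> {xs. set xs \<subseteq> A \<and> length xs = m \<and> permute_list \<sigma> xs = xs}"
    then obtain g where "g \<in> cycles_of \<sigma> m \<rightarrow>\<^sub>E A" "xs = map (\<lambda>i. g (orbit \<sigma> i)) [0..<m]"
      using stable_list_cycle_labelling[OF assms] by blast
    then show "xs \<in> (\<lambda>g. map (\<lambda>i. g (orbit \<sigma> i)) [0..<m]) ` (cycles_of \<sigma> m \<rightarrow>\<^sub>E A)"
      by blast
  qed
qed

section \<open>The signed cycle sum\<close>

lemma prod_cycles_sum_eq_sum_stable_lists: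
  fixes w :: "'b \<Rightarrow> nat \<Rightarrow> 'a :: comm_semiring_1"
  assumes \<sigma>: "\<sigma> permutes {..<m}" and "finite A"
  shows "(\<Prod>C\<in>cycles_of \<sigma> m. \<Sum>n\<in>A. \<Prod>i\<in>C. w n i)
       = (\<Sum>xs | set xs \<subseteq> A \<and> length xs = m \<and> permute_list \<sigma> xs = xs. \<Prod>i<m. w (xs ! i) i)"
proof -
  have perm: "permutation \<sigma>"
    using \<sigma> by (auto simp: permutation_permutes)
  have "(\<Prod>C\<in>cycles_of \<sigma> m. \<Sum>n\<in>A. \<Prod>i\<in>C. w n i)
      = (\<Sum>g\<in>cycles_of \<sigma> m \<rightarrow>\<^sub>E A. \<Prod>C\<in>cycles_of \<sigma> m. \<Prod>i\<in>C. w (g C) i)"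
    using \<open>finite A\<close> by (intro prod_sum_PiE) (auto simp: cycles_of_def)
  also have "\<dots> = (\<Sum>g\<in>cycles_of \<sigma> m \<rightarrow>\<^sub>E A. \<Prod>i<m. w (g (orbit \<sigma> i)) i)"
  proof (rule sum.cong[OF refl])
    fix g
    have "(\<Prod>i\<in>C. w (g C) i) = (\<Prod>i\<in>C. w (g (orbit \<sigma> i)) i)" if "C \<in> cycles_of \<sigma> m" for C
      using that orbit_eq_if_mem[OF perm] by (auto simp: cycles_of_def intro: prod.cong)
    then show "(\<Prod>C\<in>cycles_of \<sigma> m. \<Prod>i\<in>C. w (g C) i) = (\<Prod>i<m. w (g (orbit \<sigma> i)) i)"
      by (simp add: prod_cycles_of[OF \<sigma>] cong: prod.cong)
  qed
  also have "\<dots> = (\<Sum>xs | set xs \<subseteq> A \<and> length xs = m \<and> permute_list \<sigma> xs = xs. \<Prod>i<m. w (xs ! i) i)"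
    by (subst sum.reindex_bij_betw[OF bij_betw_cycle_labellings[OF \<sigma>], symmetric])
       (auto intro!: sum.cong prod.cong)
  finally show ?thesis .
qed

definition distinct_index_sum :: "('b \<Rightarrow> nat \<Rightarrow> 'a :: comm_semiring_1) \<Rightarrow> 'b set \<Rightarrow> nat list \<Rightarrow> 'a" where
  "distinct_index_sum b A L =
     (\<Sum>xs | set xs \<subseteq> A \<and> length xs = length L \<and> distinct xs. \<Prod>i<length L. b (xs ! i) (L ! i))"

lemma signed_cycle_sum_eq_distinct_index_sum:
  fixes b :: "'b \<Rightarrow> nat \<Rightarrow> 'a :: comm_ring_1"
  assumes "finite A"
  shows "(\<Sum>\<sigma> | \<sigma> permutes {..<length L}. of_int (sign \<sigma>) *
            (\<Prod>C\<in>cycles_of \<sigma> (length L). \<Sum>n\<in>A. \<Prod>i\<in>C. b n (L ! i)))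
       = distinct_index_sum b A L"
proof -
  define m where "m = length L"
  define D where "D = {xs. set xs \<subseteq> A \<and> length xs = m}"
  define W where "W = (\<lambda>xs. \<Prod>i<m. b (xs ! i) (L ! i))"
  have fin_D: "finite D"
    unfolding D_def using \<open>finite A\<close> by (rule finite_lists_length_eq)
  have fin_perms: "finite {\<sigma>. \<sigma> permutes {..<m}}"
    by (rule finite_permutations) simp
  have stable_sum: "(\<Prod>C\<in>cycles_of \<sigma> m. \<Sum>n\<in>A. \<Prod>i\<in>C. b n (L ! i))
      = (\<Sum>xs\<in>D. if permute_list \<sigma> xs = xs then W xs else 0)" if "\<sigma> permutes {..<m}" for \<sigma>
  proof -
    have "{xs. set xs \<subseteq> A \<and> length xs = m \<and> permute_list \<sigma> xs = xs} = {xs\<in>D. permute_list \<sigma> xs = xs}"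
      by (auto simp: D_def)
    then show ?thesis
      using prod_cycles_sum_eq_sum_stable_lists[OF that \<open>finite A\<close>, of "\<lambda>n i. b n (L ! i)"]
      unfolding W_def by (simp add: sum.inter_filter[OF fin_D])
  qed
  have "(\<Sum>\<sigma> | \<sigma> permutes {..<m}. of_int (sign \<sigma>) * (\<Prod>C\<in>cycles_of \<sigma> m. \<Sum>n\<in>A. \<Prod>i\<in>C. b n (L ! i)))
      = (\<Sum>\<sigma> | \<sigma> permutes {..<m}. \<Sum>xs\<in>D. of_int (if permute_list \<sigma> xs = xs then sign \<sigma> else 0) * W xs)"
    by (intro sum.cong refl) (auto simp: stable_sum sum_distrib_left intro!: sum.cong)
  also have "\<dots> = (\<Sum>xs\<in>D. of_int (\<Sum>\<sigma> | \<sigma> permutes {..<m}. if permute_list \<sigma> xs = xs then sign \<sigma> else 0) * W xs)"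
    by (subst sum.swap) (simp add: of_int_sum sum_distrib_right)
  also have "\<dots> = (\<Sum>xs\<in>D. W xs * of_int (\<Sum>\<sigma> | \<sigma> permutes {..<length xs} \<and> permute_list \<sigma> xs = xs. sign \<sigma>))"
    by (intro sum.cong refl) (simp add: D_def sum.inter_filter[OF fin_perms, symmetric] conj_commute)
  also have "\<dots> = (\<Sum>xs\<in>D. if distinct xs then W xs else 0)"
    by (intro sum.cong refl) (simp add: sum_sign_stabilizer)
  also have "\<dots> = (\<Sum>xs\<in>{xs\<in>D. distinct xs}. W xs)"
    by (rule sum.inter_filter[OF fin_D, symmetric])
  also have "\<dots> = distinct_index_sum b A L"
    unfolding distinct_index_sum_def W_def D_def m_def by (simp add: conj_assoc)
  finally show ?thesis by (simp add: m_def)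
qed

section \<open>Coefficients of a finite product\<close>

definition compositions :: "nat \<Rightarrow> nat list set" where
  "compositions k = {L. 0 \<notin> set L \<and> sum_list L = k}"

lemma length_le_sum_list: "0 \<notin> set L \<Longrightarrow> length L \<le> sum_list (L :: nat list)"
  by (induction L) auto

lemma finite_compositions: "finite (compositions k)"
proof (rule finite_subset)
  show "compositions k \<subseteq> {L. set L \<subseteq> {..k} \<and> length L \<le> k}"
  proof
    fix L assume "L \<in> compositions k"
    then have L: "0 \<notin> set L" "sum_list L = k"
      by (auto simp: compositions_def)
    then have "set L \<subseteq> {..k}"
      using member_le_sum_list by fastforce
    then show "L \<in> {L. set L \<subseteq> {..k} \<and> length L \<le> k}"
      using length_le_sum_list[OF L(1)] L(2) by simp
  qed
qed (rule finite_lists_length_le, simp)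

lemma sum_partitions_eq_sum_compositions:
  fixes F :: "nat list \<Rightarrow> 'a :: field_char_0"
  assumes F: "\<And>L L'. mset L = mset L' \<Longrightarrow> F L = F L'"
  shows "(\<Sum>L\<in>partitions_of k. (1 / of_nat (C_stb L)) * F L)
       = (\<Sum>L\<in>compositions k. F L / fact (length L))"
proof -
  have "(\<Sum>L\<in>compositions k. F L / fact (length L))
      = (\<Sum>L\<in>partitions_of k. \<Sum>L'\<in>{L'\<in>compositions k. sort L' = L}. F L' / fact (length L'))"
    using finite_compositions
    by (intro sum.group[symmetric])
       (auto simp: compositions_def partitions_of_def simp flip: sum_mset_sum_list)
  also have "\<dots> = (\<Sum>L\<in>partitions_of k. (1 / of_nat (C_stb L)) * F L)"
  proof (rule sum.cong[OF refl])
    fix L assume L: "L \<in> partitions_of k"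
    have rearrangements: "{L'\<in>compositions k. sort L' = L} = permutations_of_multiset (mset L)"
    proof (intro set_eqI iffI)
      fix L' assume "L' \<in> permutations_of_multiset (mset L)"
      then have "mset L' = mset L"
        by (simp add: permutations_of_multiset_def)
      then show "L' \<in> {L'\<in>compositions k. sort L' = L}"
        using L by (auto simp: compositions_def partitions_of_def properties_for_sort
                    dest: mset_eq_setD simp flip: sum_mset_sum_list)
    qed (auto simp: permutations_of_multiset_def)
    have "card (permutations_of_multiset (mset L)) * C_stb L = fact (length L)"
      using card_permutations_of_multiset_aux[of "mset L"] by (simp add: C_stb_def count_mset)
    then have card: "of_nat (card (permutations_of_multiset (mset L))) = (fact (length L) / of_nat (C_stb L) :: 'a)"
      by (metis (mono_tags, lifting) fact_nonzero mult_0_right nonzero_eq_divide_eq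
            of_nat_0_eq_iff of_nat_fact of_nat_mult)
    have "(\<Sum>L'\<in>permutations_of_multiset (mset L). F L' / fact (length L'))
        = (\<Sum>L'\<in>permutations_of_multiset (mset L). F L / fact (length L))"
    proof (rule sum.cong[OF refl])
      fix L' assume "L' \<in> permutations_of_multiset (mset L)"
      then have "mset L' = mset L"
        by (simp add: permutations_of_multiset_def)
      then show "F L' / fact (length L') = F L / fact (length L)"
        using F by (metis size_mset)
    qed
    then show "(\<Sum>L'\<in>{L'\<in>compositions k. sort L' = L}. F L' / fact (length L')) = (1 / of_nat (C_stb L)) * F L"
      by (simp add: rearrangements card)
  qed
  finally show ?thesis ..
qed

lemma distinct_index_sum_mset_eq:
  assumes "mset L = mset L'"
  shows "distinct_index_sum b A L = distinct_index_sum b A L'"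
proof -
  obtain p where p: "p permutes {..<length L'}" and L: "L = permute_list p L'"
    using mset_eq_permutation[OF assms] by metis
  define m where "m = length L'"
  define D where "D = {xs. set xs \<subseteq> A \<and> length xs = m \<and> distinct xs}"
  have p_xs: "p permutes {..<length xs}" if "xs \<in> D" for xs
    using p that by (simp add: D_def m_def)
  have bij: "bij_betw (permute_list p) D D"
    using p_xs permutes_inv[OF p]
    by (intro bij_betw_byWitness[where f' = "permute_list (inv p)"])
       (auto simp: D_def m_def permute_list_compose[symmetric] permutes_inv_o[OF p])
  have "distinct_index_sum b A L = (\<Sum>xs\<in>D. \<Prod>i<m. b (xs ! i) (L' ! p i))"
    unfolding distinct_index_sum_def L D_def m_def
    by (auto simp: permute_list_nth[OF p] intro!: sum.cong prod.cong)
  also have "\<dots> = (\<Sum>xs\<in>D. \<Prod>i<m. b (permute_list p xs ! i) (L' ! p i))"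
    by (rule sum.reindex_bij_betw[OF bij, of "\<lambda>xs. \<Prod>i<m. b (xs ! i) (L' ! p i)", symmetric])
  also have "\<dots> = (\<Sum>xs\<in>D. \<Prod>i<m. b (xs ! p i) (L' ! p i))"
  proof (intro sum.cong prod.cong refl)
    fix xs i assume "xs \<in> D" "i \<in> {..<m}"
    then show "b (permute_list p xs ! i) (L' ! p i) = b (xs ! p i) (L' ! p i)"
      using permute_list_nth[OF p_xs] by (simp add: D_def)
  qed
  also have "\<dots> = (\<Sum>xs\<in>D. \<Prod>i<m. b (xs ! i) (L' ! i))"
  proof (intro sum.cong refl)
    fix xs
    show "(\<Prod>i<m. b (xs ! p i) (L' ! p i)) = (\<Prod>i<m. b (xs ! i) (L' ! i))"
      using prod.permute[OF p[folded m_def], of "\<lambda>i. b (xs ! i) (L' ! i)"] by (simp add: comp_def)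
  qed
  also have "\<dots> = distinct_index_sum b A L'"
    by (simp add: distinct_index_sum_def D_def m_def)
  finally show ?thesis .
qed

definition mset_of_counts :: "'b list \<Rightarrow> nat list \<Rightarrow> 'b multiset" where
  "mset_of_counts xs L = (\<Sum>i<length L. replicate_mset (L ! i) (xs ! i))"

lemma count_mset_of_counts_nth:
  assumes "distinct xs" "length xs = length L" "i < length L"
  shows "count (mset_of_counts xs L) (xs ! i) = L ! i"
proof -
  have "count (mset_of_counts xs L) (xs ! i) = (\<Sum>j<length L. if j = i then L ! j else 0)"
    unfolding mset_of_counts_def count_sum
    using assms by (intro sum.cong refl) (auto simp: nth_eq_iff_index_eq)
  then show ?thesis
    using assms(3) by simp
qed

lemma count_mset_of_counts_notin:
  assumes "length xs = length L" "x \<notin> set xs"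
  shows "count (mset_of_counts xs L) x = 0"
  using assms by (auto simp: mset_of_counts_def count_sum intro!: sum.neutral)

lemma set_mset_of_counts:
  assumes "length xs = length L" "0 \<notin> set L"
  shows "set_mset (mset_of_counts xs L) = set xs"
  using assms by (auto simp: mset_of_counts_def set_mset_sum in_set_conv_nth) blast

lemma size_mset_of_counts: "size (mset_of_counts xs L) = sum_list L"
  by (simp add: mset_of_counts_def size_multiset_sum sum_list_sum_nth atLeast0LessThan)

lemma mset_of_counts_count:
  assumes "xs \<in> permutations_of_set (set_mset X)"
  shows "mset_of_counts xs (map (count X) xs) = X"
proof (rule multiset_eqI)
  fix x
  have xs: "distinct xs" "set xs = set_mset X"
    using assms by (auto simp: permutations_of_set_def)
  show "count (mset_of_counts xs (map (count X) xs)) x = count X x"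
  proof (cases "x \<in> set xs")
    case True
    then obtain i where "i < length xs" "x = xs ! i"
      by (auto simp: in_set_conv_nth)
    then show ?thesis
      using count_mset_of_counts_nth[of xs "map (count X) xs" i] xs by simp
  next
    case False
    then show ?thesis
      using count_mset_of_counts_notin[of xs "map (count X) xs" x] xs by (simp add: not_in_iff)
  qed
qed

lemma bij_betw_mset_of_counts:
  "bij_betw (\<lambda>(L, xs). (mset_of_counts xs L, xs))
     (SIGMA L:compositions k. {xs. set xs \<subseteq> A \<and> length xs = length L \<and> distinct xs})
     (SIGMA X:multisets_of_size A k. permutations_of_set (set_mset X))"
proof -
  have "map (count (mset_of_counts xs L)) xs = L" if "length xs = length L" "distinct xs" for L xs
    using that by (auto simp: count_mset_of_counts_nth intro: nth_equalityI)
  moreover have "(mset_of_counts xs L, xs) \<in> (SIGMA X:multisets_of_size A k. permutations_of_set (set_mset X))"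
    if "L \<in> compositions k" "xs \<in> {xs. set xs \<subseteq> A \<and> length xs = length L \<and> distinct xs}" for L xs
    using that by (auto simp: compositions_def multisets_of_size_def permutations_of_set_def
                    set_mset_of_counts size_mset_of_counts)
  moreover have "(map (count X) xs, xs)
          \<in> (SIGMA L:compositions k. {xs. set xs \<subseteq> A \<and> length xs = length L \<and> distinct xs})"
    if "X \<in> multisets_of_size A k" "xs \<in> permutations_of_set (set_mset X)" for X xs
  proof -
    have X: "set_mset X \<subseteq> A" "size X = k" and xs: "distinct xs" "set xs = set_mset X"
      using that by (auto simp: multisets_of_size_def permutations_of_set_def)
    have "sum_list (map (count X) xs) = size X"
      using xs by (simp add: sum_list_distinct_conv_sum_set size_multiset_overloaded_eq)
    then show ?thesis
      using X xs by (auto simp: compositions_def count_eq_zero_iff)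
  qed
  ultimately show ?thesis
    by (intro bij_betw_byWitness[where f' = "\<lambda>(X, xs). (map (count X) xs, xs)"])
       (force simp: mset_of_counts_count)+
qed

lemma sum_multisets_of_size_eq_sum_compositions:
  fixes b :: "'b \<Rightarrow> nat \<Rightarrow> 'a :: field_char_0"
  assumes "finite A"
  shows "(\<Sum>X\<in>multisets_of_size A k. \<Prod>n\<in>set_mset X. b n (count X n))
       = (\<Sum>L\<in>compositions k. distinct_index_sum b A L / fact (length L))"
proof -
  define D where "D = (\<lambda>L :: nat list. {xs. set xs \<subseteq> A \<and> length xs = length L \<and> distinct xs})"
  define G where "G = (\<lambda>(L, xs). (\<Prod>i<length L. b (xs ! i) (L ! i)) / fact (length L))"
  have fin_D: "finite (D L)" for L
    using finite_lists_length_eq[OF assms] by (rule finite_subset[rotated]) (auto simp: D_def)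
  have "(\<Sum>X\<in>multisets_of_size A k. \<Prod>n\<in>set_mset X. b n (count X n))
      = (\<Sum>X\<in>multisets_of_size A k. \<Sum>xs\<in>permutations_of_set (set_mset X). G (map (count X) xs, xs))"
  proof (rule sum.cong[OF refl])
    fix X :: "'b multiset"
    have "G (map (count X) xs, xs) = (\<Prod>n\<in>set_mset X. b n (count X n)) / fact (card (set_mset X))"
      if "xs \<in> permutations_of_set (set_mset X)" for xs
    proof -
      have xs: "distinct xs" "set xs = set_mset X"
        using that by (auto simp: permutations_of_set_def)
      then have "length xs = card (set_mset X)"
        by (metis distinct_card)
      then show ?thesis
        using prod_nth_distinct[of xs "\<lambda>n. b n (count X n)"] xs by (simp add: G_def)
    qed
    then show "(\<Prod>n\<in>set_mset X. b n (count X n))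
        = (\<Sum>xs\<in>permutations_of_set (set_mset X). G (map (count X) xs, xs))"
      by simp
  qed
  also have "\<dots> = (\<Sum>(X, xs)\<in>(SIGMA X:multisets_of_size A k. permutations_of_set (set_mset X)).
                    G (map (count X) xs, xs))"
    using assms by (intro sum.Sigma) auto
  also have "\<dots> = (\<Sum>(L, xs)\<in>(SIGMA L:compositions k. D L). G (L, xs))"
    unfolding D_def
    by (subst sum.reindex_bij_betw[OF bij_betw_mset_of_counts, symmetric])
       (auto simp: count_mset_of_counts_nth intro!: sum.cong arg_cong[where f = G] nth_equalityI)
  also have "\<dots> = (\<Sum>L\<in>compositions k. distinct_index_sum b A L / fact (length L))"
    by (subst sum.Sigma[symmetric])
       (auto simp: finite_compositions fin_D[unfolded D_def] G_def D_def distinct_index_sum_def sum_divide_distrib)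
  finally show ?thesis .
qed

definition factor_fps :: "(nat \<Rightarrow> 'a :: zero_neq_one) \<Rightarrow> 'a fps" where
  "factor_fps c = Abs_fps (\<lambda>j. if j = 0 then 1 else c j)"

lemma fps_nth_factor_fps [simp]: "fps_nth (factor_fps c) j = (if j = 0 then 1 else c j)"
  by (simp add: factor_fps_def)

lemma fps_nth_prod_factor_fps:
  fixes b :: "'b \<Rightarrow> nat \<Rightarrow> 'a :: field_char_0"
  assumes "finite A"
  shows "fps_nth (\<Prod>n\<in>A. factor_fps (b n)) k
       = (\<Sum>L\<in>partitions_of k. (1 / of_nat (C_stb L)) *
            (\<Sum>\<sigma>\<in>{\<sigma>. \<sigma> permutes {..<length L}}. of_int (sign \<sigma>) *
               (\<Prod>C\<in>cycles_of \<sigma> (length L). \<Sum>n\<in>A. \<Prod>i\<in>C. b n (L ! i))))"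
proof -
  have "fps_nth (\<Prod>n\<in>A. factor_fps (b n)) k
      = (\<Sum>X\<in>multisets_of_size A k. \<Prod>n\<in>set_mset X. b n (count X n))"
    unfolding fps_prod_nth'[OF assms]
  proof (rule sum.cong[OF refl])
    fix X assume "X \<in> multisets_of_size A k"
    then have "set_mset X \<subseteq> A"
      by (simp add: multisets_of_size_def)
    then show "(\<Prod>n\<in>A. fps_nth (factor_fps (b n)) (count X n)) = (\<Prod>n\<in>set_mset X. b n (count X n))"
      using assms by (intro prod.mono_neutral_cong_right) (auto simp: count_eq_zero_iff)
  qed
  also have "\<dots> = (\<Sum>L\<in>compositions k. distinct_index_sum b A L / fact (length L))"
    by (rule sum_multisets_of_size_eq_sum_compositions[OF assms])
  also have "\<dots> = (\<Sum>L\<in>partitions_of k. (1 / of_nat (C_stb L)) * distinct_index_sum b A L)"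
    by (rule sum_partitions_eq_sum_compositions[symmetric]) (rule distinct_index_sum_mset_eq)
  finally show ?thesis
    by (simp add: signed_cycle_sum_eq_distinct_index_sum[OF assms])
qed

section \<open>Passage to the infinite product\<close>

lemma sums_factor_fps:
  fixes c :: "nat \<Rightarrow> 'a :: real_normed_algebra_1"
  assumes "(\<lambda>j. c (Suc j) * z ^ Suc j) sums s"
  shows "(\<lambda>j. fps_nth (factor_fps c) j * z ^ j) sums (1 + s)"
  using assms sums_Suc_iff[of "\<lambda>j. fps_nth (factor_fps c) j * z ^ j" s] by (simp add: add.commute)

lemma
  fixes f :: "complex \<Rightarrow> complex"
  assumes r: "r > 0" and sums: "\<And>z. z \<in> ball 0 r \<Longrightarrow> (\<lambda>j. fps_nth F j * z ^ j) sums f z"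
  shows sums_on_ball_has_fps_expansion: "f has_fps_expansion F"
    and sums_on_ball_holomorphic: "f holomorphic_on ball 0 r"
proof -
  have "eventually (\<lambda>z. z \<in> ball 0 r) (nhds (0 :: complex))"
    using r by (intro eventually_nhds_in_open) auto
  then have "eventually (\<lambda>z. (\<lambda>j. fps_nth F j * z ^ j) sums f z) (nhds 0)"
    by (rule eventually_mono) (rule sums)
  then show "f has_fps_expansion F"
    by (rule has_fps_expansionI)
  have "ereal r \<le> fps_conv_radius F"
    unfolding fps_conv_radius_def
  proof (rule conv_radius_geI_ex')
    fix \<rho> :: real assume "0 < \<rho>" "ereal \<rho> < ereal r"
    then show "summable (\<lambda>j. fps_nth F j * of_real \<rho> ^ j)"
      using sums[of "of_real \<rho>"] by (auto simp: sums_iff)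
  qed
  then have "ball 0 r \<subseteq> eball 0 (fps_conv_radius F)"
    by (auto simp: dist_commute elim!: order.strict_trans2[rotated] simp flip: ereal_less_eq)
  then have "eval_fps F holomorphic_on ball 0 r"
    by (rule holomorphic_on_eval_fps)
  then show "f holomorphic_on ball 0 r"
    by (rule holomorphic_transform) (metis eval_fps_def sums sums_unique)
qed

lemma tendsto_fps_nth_uniform_limit:
  fixes Q :: "nat \<Rightarrow> complex \<Rightarrow> complex"
  assumes "uniform_limit (ball 0 r) Q P sequentially" and "r > 0"
    and "\<And>N. Q N holomorphic_on ball 0 r"
    and "\<And>N. Q N has_fps_expansion F N" and "P has_fps_expansion G"
  shows "(\<lambda>N. fps_nth (F N) k) \<longlonglongrightarrow> fps_nth G k"
proof -
  have "(\<lambda>N. (deriv ^^ k) (Q N) 0) \<longlonglongrightarrow> (deriv ^^ k) P 0"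
    using assms by (intro higher_deriv_complex_uniform_limit) auto
  then show ?thesis
    unfolding fps_nth_fps_expansion[OF assms(4)] fps_nth_fps_expansion[OF assms(5)]
    by (intro tendsto_divide tendsto_const) auto
qed

lemma summable_prod_of_summable_prod_list:
  fixes a :: "nat \<Rightarrow> nat \<Rightarrow> 'a :: {comm_monoid_mult, topological_comm_monoid_add}"
  assumes summable: "\<And>ks. ks \<noteq> [] \<Longrightarrow> 0 \<notin> set ks \<Longrightarrow>
                         summable (\<lambda>n. \<Prod>j<length ks. a (Suc n) (ks ! j))"
    and "finite C" "C \<noteq> {}" "\<And>i. i \<in> C \<Longrightarrow> \<kappa> i \<noteq> 0"
  shows "summable (\<lambda>n. \<Prod>i\<in>C. a (Suc n) (\<kappa> i))"
proof -
  obtain xs where xs: "distinct xs" "set xs = C"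
    using finite_distinct_list[OF \<open>finite C\<close>] by blast
  have "(\<Prod>j<length (map \<kappa> xs). a (Suc n) (map \<kappa> xs ! j)) = (\<Prod>i\<in>C. a (Suc n) (\<kappa> i))" for n
    using prod_nth_distinct[OF xs(1), of "\<lambda>i. a (Suc n) (\<kappa> i)"] xs(2) by simp
  moreover have "map \<kappa> xs \<noteq> []" "0 \<notin> set (map \<kappa> xs)"
    using xs(2) assms(3,4) by force+
  ultimately show ?thesis
    using summable[of "map \<kappa> xs"] by simp
qed

lemma tendsto_fps_nth_partial_products:
  fixes a :: "nat \<Rightarrow> nat \<Rightarrow> complex"
  assumes series_conv: "\<And>ks. ks \<noteq> [] \<Longrightarrow> 0 \<notin> set ks \<Longrightarrow>
                         summable (\<lambda>n. \<Prod>j<length ks. a (Suc n) (ks ! j))"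
  shows "(\<lambda>N. fps_nth (\<Prod>n\<in>{1..N}. factor_fps (a n)) k)
           \<longlonglongrightarrow> (\<Sum>L\<in>partitions_of k. (1 / of_nat (C_stb L)) *
                 (\<Sum>\<sigma>\<in>{\<sigma>. \<sigma> permutes {..<length L}}. of_int (sign \<sigma>) * A_coef a \<sigma> L))"
proof -
  have "(\<lambda>N. \<Sum>n\<in>{1..N}. \<Prod>i\<in>C. a n (L ! i)) \<longlonglongrightarrow> (\<Sum>n. \<Prod>i\<in>C. a (Suc n) (L ! i))"
    if L: "L \<in> partitions_of k" and \<sigma>: "\<sigma> permutes {..<length L}"
      and cycle: "C \<in> cycles_of \<sigma> (length L)" for L \<sigma> C
  proof -
    obtain i where "i < length L" "C = orbit \<sigma> i"
      using cycle by (auto simp: cycles_of_def)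
    then have C: "C \<subseteq> {..<length L}" "C \<noteq> {}"
      using permutes_orbit_subset[OF \<sigma>] orbit_nonempty[of \<sigma> i] by auto
    moreover have "L ! j \<noteq> 0" if "j \<in> C" for j
    proof -
      have "L ! j \<in> set L"
        using that C(1) by auto
      then show ?thesis
        using L unfolding partitions_of_def by (metis mem_Collect_eq)
    qed
    moreover have "finite C"
      using C(1) by (rule finite_subset) simp
    ultimately have "summable (\<lambda>n. \<Prod>i\<in>C. a (Suc n) (L ! i))"
      by (intro summable_prod_of_summable_prod_list[OF series_conv]) auto
    then show ?thesis
      using summable_LIMSEQ by (simp add: sum.atLeast1_atMost_eq atLeast0LessThan)
  qed
  then show ?thesis
    unfolding fps_nth_prod_factor_fps[OF finite_atLeastAtMost] A_coef_def
    by (intro tendsto_sum tendsto_mult tendsto_const tendsto_prod) auto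
qed

theorem mainTheorem2:
  fixes a :: "nat \<Rightarrow> nat \<Rightarrow> complex" and X :: "nat \<Rightarrow> complex"
    and P :: "complex \<Rightarrow> complex" and r :: real and k :: nat
  assumes r_pos: "r > 0"
    and analytic: "\<And>n z. n \<ge> 1 \<Longrightarrow> z \<in> ball 0 r \<Longrightarrow> summable (\<lambda>j. a n (Suc j) * z ^ Suc j)"
    and unif: "uniform_limit (ball 0 r) (\<lambda>N z. \<Prod>n\<in>{1..N}. factor_fun a n z) P sequentially"
    and series_conv: "\<And>ks. ks \<noteq> [] \<Longrightarrow> 0 \<notin> set ks \<Longrightarrow>
                         summable (\<lambda>n. \<Prod>j<length ks. a (Suc n) (ks ! j))"
    and expansion: "\<forall>\<^sub>F z in nhds 0. (\<lambda>j. X (Suc j) * z ^ Suc j) sums (P z - 1)"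
    and k_pos: "k \<ge> 1"
  shows "X k = (\<Sum>L\<in>partitions_of k.
                  (1 / of_nat (C_stb L)) *
                  (\<Sum>\<sigma>\<in>{\<sigma>. \<sigma> permutes {..<length L}}. of_int (sign \<sigma>) * A_coef a \<sigma> L))"
proof -
  have factor_sums: "(\<lambda>j. fps_nth (factor_fps (a n)) j * z ^ j) sums factor_fun a n z"
    if "n \<ge> 1" "z \<in> ball 0 r" for n z
    using sums_factor_fps[OF summable_sums[OF analytic[OF that]]] by (simp add: factor_fun_def)
  have "factor_fun a n has_fps_expansion factor_fps (a n)" "factor_fun a n holomorphic_on ball 0 r"
    if "n \<ge> 1" for n
    using sums_on_ball_has_fps_expansion[OF r_pos factor_sums[OF that]]
      sums_on_ball_holomorphic[OF r_pos factor_sums[OF that]] by auto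
  then have partial_products:
      "(\<lambda>z. \<Prod>n\<in>{1..N}. factor_fun a n z) holomorphic_on ball 0 r"
      "(\<lambda>z. \<Prod>n\<in>{1..N}. factor_fun a n z) has_fps_expansion (\<Prod>n\<in>{1..N}. factor_fps (a n))"
    for N
    by (auto intro!: has_fps_expansion_prod holomorphic_on_prod)
  have "eventually (\<lambda>z. (\<lambda>j. fps_nth (factor_fps X) j * z ^ j) sums P z) (nhds 0)"
    using expansion by (rule eventually_mono) (drule sums_factor_fps, simp)
  then have "P has_fps_expansion factor_fps X"
    by (rule has_fps_expansionI)
  then have "(\<lambda>N. fps_nth (\<Prod>n\<in>{1..N}. factor_fps (a n)) k) \<longlonglongrightarrow> fps_nth (factor_fps X) k"
    by (rule tendsto_fps_nth_uniform_limit[OF unif r_pos partial_products])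
  then have "(\<lambda>N. fps_nth (\<Prod>n\<in>{1..N}. factor_fps (a n)) k) \<longlonglongrightarrow> X k"
    using k_pos by simp
  then show ?thesis
    using tendsto_fps_nth_partial_products[OF series_conv] LIMSEQ_unique by blast
qed

end
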